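(* Assume that no connected component of nonabsorbing action profiles is rectangular. If $w\in W_H\setminus W$, then there are $\ell\in\{1,\dots,L\}$ and $x\in X^\ell$ such that $w\in W_H(x)$ and ${\cal E}_J(x)\ne\emptyset$.
   Context: $I$ is a finite set of players, $A_i$ finite nonempty action sets, $A=\prod_iA_i$, $r_i:A\to(0,1]$, $p:A\to[0,1]$. $B=\{a:p(a)=0\}$ with connected components $B^1,\dots,B^L$ in the graph where $a,a'\in B$ are adjacent iff $a_{-i}=a'_{-i}$ for some $i$; $B^\ell$ is rectangular if it is a product $\prod_iB^\ell_i$. Let $\Xi=\prod_i\Delta(A_i)$, $p(x)$ and $r_i(x)$ the multilinear extensions ($r_i(x)=\sum_ar_i(a)p(a)\prod_jx_j(a_j)/p(x)$ when $p(x)>0$), $X^\ell=\{x\in\Xi:\prod_i{\rm supp}(x_i)\subseteq B^\ell\}$, $X=\bigcup_\ell X^\ell$. $\rho_i(x):=\max\{r_i(a_i,x_{-i}):a_i\in A_i,\ p(a_i,x_{-i})>0\}$, with $\max\emptyset=-\infty$. For $x\in X$: $W_H(x):=\{w\in\mathbb R^I:w_i>\rho_i(x)\ \forall i\}$; $W(x):=\{w\in\mathbb R^I: w_i\ge\rho_i(x)\ \forall i,\ w_i=\rho_i(x)\text{ for some }i\}$; $W_H:=\bigcup_{x\in X}W_H(x)$, $W:=\bigcup_{x\in X}W(x)$. For $x\in X$, $(J,a_J)$ with $\emptyset\neq J\subseteq I$, $a_J\in\prod_{i\in J}A_i$, is an exit at $x$ if $p(a_J,x_{-J})>0$ and $p(a_{J'},x_{-J'})=0$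 for all proper $J'\subsetneq J$; a joint exit if $|J|\ge 2$; ${\cal E}_J(x)$ is the set of joint exits at $x$. *)

theory Defs
  imports "HOL-Analysis.Analysis" "HOL-Library.Extended_Real"
begin

text \<open>Players: finite set I. Action sets: A i. Pure action profiles: PiE I A.
  Mixed strategy profiles: x i a = probability that player i plays a.\<close>

type_synonym ('i,'a) mixed = "'i \<Rightarrow> 'a \<Rightarrow> real"

definition profiles :: "'i set \<Rightarrow> ('i \<Rightarrow> 'a set) \<Rightarrow> ('i \<Rightarrow> 'a) set" where
  "profiles I A = PiE I A"

definition mixed_profiles :: "'i set \<Rightarrow> ('i \<Rightarrow> 'a set) \<Rightarrow> ('i,'a) mixed set" where
  "mixed_profiles I A = {x. \<forall>i\<in>I. (\<forall>a\<in>A i. x i a \<ge> 0) \<and> (\<forall>a. a \<notin> A i \<longrightarrow> x i a = 0)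
                                 \<and> sum (x i) (A i) = 1}"

definition mlext :: "'i set \<Rightarrow> ('i \<Rightarrow> 'a set) \<Rightarrow> (('i \<Rightarrow> 'a) \<Rightarrow> real) \<Rightarrow> ('i,'a) mixed \<Rightarrow> real" where
  "mlext I A f x = (\<Sum>a\<in>profiles I A. f a * (\<Prod>j\<in>I. x j (a j)))"

definition p_ext :: "'i set \<Rightarrow> ('i \<Rightarrow> 'a set) \<Rightarrow> (('i \<Rightarrow> 'a) \<Rightarrow> real) \<Rightarrow> ('i,'a) mixed \<Rightarrow> real" where
  "p_ext I A p x = mlext I A p x"

text \<open>r_i(x) = sum_a r_i(a) p(a) prod_j x_j(a_j) / p(x) (only used when p(x) > 0)\<close>
definition r_ext :: "'i set \<Rightarrow> ('i \<Rightarrow> 'a set) \<Rightarrow> (('i \<Rightarrow> 'a) \<Rightarrow> real) \<Rightarrow> ('i \<Rightarrow> ('i \<Rightarrow> 'a) \<Rightarrow> real)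
                     \<Rightarrow> 'i \<Rightarrow> ('i,'a) mixed \<Rightarrow> real" where
  "r_ext I A p r i x = mlext I A (\<lambda>a. r i a * p a) x / p_ext I A p x"

definition pure :: "'a \<Rightarrow> 'a \<Rightarrow> real" where
  "pure b = (\<lambda>c. if c = b then 1 else 0)"

definition deviate :: "'i set \<Rightarrow> ('i \<Rightarrow> 'a) \<Rightarrow> ('i,'a) mixed \<Rightarrow> ('i,'a) mixed" where
  "deviate J aJ x = (\<lambda>j. if j \<in> J then pure (aJ j) else x j)"

definition rho :: "'i set \<Rightarrow> ('i \<Rightarrow> 'a set) \<Rightarrow> (('i \<Rightarrow> 'a) \<Rightarrow> real) \<Rightarrow> ('i \<Rightarrow> ('i \<Rightarrow> 'a) \<Rightarrow> real)
                   \<Rightarrow> ('i,'a) mixed \<Rightarrow> 'i \<Rightarrow> ereal" where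
  "rho I A p r x i =
     (let S = {ereal (r_ext I A p r i (deviate {i} (\<lambda>_. ai) x)) | ai.
                 ai \<in> A i \<and> p_ext I A p (deviate {i} (\<lambda>_. ai) x) > 0}
      in if S = {} then -\<infinity> else Max S)"

definition nonabs :: "'i set \<Rightarrow> ('i \<Rightarrow> 'a set) \<Rightarrow> (('i \<Rightarrow> 'a) \<Rightarrow> real) \<Rightarrow> ('i \<Rightarrow> 'a) set" where
  "nonabs I A p = {a \<in> profiles I A. p a = 0}"

definition adj :: "'i set \<Rightarrow> ('i \<Rightarrow> 'a set) \<Rightarrow> (('i \<Rightarrow> 'a) \<Rightarrow> real) \<Rightarrow> ('i \<Rightarrow> 'a) \<Rightarrow> ('i \<Rightarrow> 'a) \<Rightarrow> bool" where
  "adj I A p a b \<longleftrightarrow> a \<in> nonabs I A p \<and> b \<in> nonabs I A p \<and>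
                       (\<exists>i\<in>I. \<forall>j\<in>I - {i}. a j = b j)"

definition components :: "'i set \<Rightarrow> ('i \<Rightarrow> 'a set) \<Rightarrow> (('i \<Rightarrow> 'a) \<Rightarrow> real) \<Rightarrow> ('i \<Rightarrow> 'a) set set" where
  "components I A p = {{b \<in> nonabs I A p. (adj I A p)\<^sup>*\<^sup>* a b} | a. a \<in> nonabs I A p}"

definition rectangular :: "'i set \<Rightarrow> ('i \<Rightarrow> 'a) set \<Rightarrow> bool" where
  "rectangular I C \<longleftrightarrow> (\<exists>Ci. C = PiE I Ci)"

definition supp :: "('a \<Rightarrow> real) \<Rightarrow> 'a set \<Rightarrow> 'a set" where
  "supp xi Ai = {a \<in> Ai. xi a > 0}"

definition Xcomp :: "'i set \<Rightarrow> ('i \<Rightarrow> 'a set) \<Rightarrow> ('i \<Rightarrow> 'a) set \<Rightarrow> ('i,'a) mixed set" where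
  "Xcomp I A C = {x \<in> mixed_profiles I A. PiE I (\<lambda>i. supp (x i) (A i)) \<subseteq> C}"

definition Xall :: "'i set \<Rightarrow> ('i \<Rightarrow> 'a set) \<Rightarrow> (('i \<Rightarrow> 'a) \<Rightarrow> real) \<Rightarrow> ('i,'a) mixed set" where
  "Xall I A p = (\<Union>C\<in>components I A p. Xcomp I A C)"

definition WH_at :: "'i set \<Rightarrow> ('i \<Rightarrow> 'a set) \<Rightarrow> (('i \<Rightarrow> 'a) \<Rightarrow> real) \<Rightarrow> ('i \<Rightarrow> ('i \<Rightarrow> 'a) \<Rightarrow> real)
                     \<Rightarrow> ('i,'a) mixed \<Rightarrow> ('i \<Rightarrow> real) set" where
  "WH_at I A p r x = {w. \<forall>i\<in>I. ereal (w i) > rho I A p r x i}"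

definition W_at :: "'i set \<Rightarrow> ('i \<Rightarrow> 'a set) \<Rightarrow> (('i \<Rightarrow> 'a) \<Rightarrow> real) \<Rightarrow> ('i \<Rightarrow> ('i \<Rightarrow> 'a) \<Rightarrow> real)
                     \<Rightarrow> ('i,'a) mixed \<Rightarrow> ('i \<Rightarrow> real) set" where
  "W_at I A p r x = {w. (\<forall>i\<in>I. ereal (w i) \<ge> rho I A p r x i) \<and>
                          (\<exists>i\<in>I. ereal (w i) = rho I A p r x i)}"

definition WH :: "'i set \<Rightarrow> ('i \<Rightarrow> 'a set) \<Rightarrow> (('i \<Rightarrow> 'a) \<Rightarrow> real) \<Rightarrow> ('i \<Rightarrow> ('i \<Rightarrow> 'a) \<Rightarrow> real)
                     \<Rightarrow> ('i \<Rightarrow> real) set" where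
  "WH I A p r = (\<Union>x\<in>Xall I A p. WH_at I A p r x)"

definition W :: "'i set \<Rightarrow> ('i \<Rightarrow> 'a set) \<Rightarrow> (('i \<Rightarrow> 'a) \<Rightarrow> real) \<Rightarrow> ('i \<Rightarrow> ('i \<Rightarrow> 'a) \<Rightarrow> real)
                     \<Rightarrow> ('i \<Rightarrow> real) set" where
  "W I A p r = (\<Union>x\<in>Xall I A p. W_at I A p r x)"

definition is_exit :: "'i set \<Rightarrow> ('i \<Rightarrow> 'a set) \<Rightarrow> (('i \<Rightarrow> 'a) \<Rightarrow> real) \<Rightarrow> ('i,'a) mixed
                        \<Rightarrow> 'i set \<Rightarrow> ('i \<Rightarrow> 'a) \<Rightarrow> bool" where
  "is_exit I A p x J aJ \<longleftrightarrow> J \<noteq> {} \<and> J \<subseteq> I \<and> aJ \<in> PiE J A \<and>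
      p_ext I A p (deviate J aJ x) > 0 \<and>
      (\<forall>J'. J' \<subset> J \<longrightarrow> p_ext I A p (deviate J' aJ x) = 0)"

definition joint_exits :: "'i set \<Rightarrow> ('i \<Rightarrow> 'a set) \<Rightarrow> (('i \<Rightarrow> 'a) \<Rightarrow> real) \<Rightarrow> ('i,'a) mixed
                        \<Rightarrow> ('i set \<times> ('i \<Rightarrow> 'a)) set" where
  "joint_exits I A p x = {(J, aJ). is_exit I A p x J aJ \<and> card J \<ge> 2}"

end

theory Submission
  imports Defs
begin

(* Suppose the contrary and, among the profiles x in X with w in W_H(x), take one with the fewest
   unilateral exits (actions b of a player i with p(b, x_{-i}) > 0).  Since x has no joint exit,
   every profile built from actions that are not unilateral exits at x is nonabsorbing; this
   rectangle R contains the support of x, hence lies in the component C of x.  As C is not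
   rectangular, some e in R has a neighbour e' in C outside R, differing from e only in player i.
   Along the segment from x to the pure profile e the unilateral exits stay those of x and can only
   disappear at the endpoint; since w is not in W, the payoff of an exit never reaches w, so
   w is in W_H(e).  But e'_i is a unilateral exit at x and not at e, contradicting minimality. *)

section \<open>Mixed profiles and their supports\<close>

(* For x in X, ({i}, b) is an exit at x iff b is in unilateral_exits I A p x i, and rho I A p r x i
   is the maximum of r_i over these deviations (rho_unilateral_exits). *)
definition unilateral_exits :: "'i set \<Rightarrow> ('i \<Rightarrow> 'a set) \<Rightarrow> (('i \<Rightarrow> 'a) \<Rightarrow> real) \<Rightarrow> ('i,'a) mixed
                                \<Rightarrow> 'i \<Rightarrow> 'a set" where
  "unilateral_exits I A p x i = {b \<in> A i. 0 < p_ext I A p (deviate {i} (\<lambda>_. b) x)}"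

lemma mixed_profilesD:
  assumes "y \<in> mixed_profiles I A" "i \<in> I"
  shows "0 \<le> y i a" and "a \<notin> A i \<Longrightarrow> y i a = 0" and "sum (y i) (A i) = 1"
  using assms unfolding mixed_profiles_def by (cases "a \<in> A i"; auto)+

lemma supp_mixed_profile_nonempty:
  assumes "y \<in> mixed_profiles I A" "i \<in> I"
  shows "supp (y i) (A i) \<noteq> {}"
proof
  assume "supp (y i) (A i) = {}"
  then have "\<forall>a\<in>A i. y i a = 0"
    using mixed_profilesD(1)[OF assms] by (force simp: supp_def order_less_le)
  then show False using mixed_profilesD(3)[OF assms] by simp
qed

lemma supp_pure: "b \<in> B \<Longrightarrow> supp (pure b) B = {b}"
  unfolding supp_def pure_def by auto

lemma supp_deviate1:
  "b \<in> A i \<Longrightarrow> supp (deviate {i} (\<lambda>_. b) x j) (A j) = (if j = i then {b} else supp (x j) (A j))"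
  by (simp add: deviate_def supp_pure)

lemma deviate_in_mixed_profiles:
  assumes "x \<in> mixed_profiles I A" "\<And>j. j \<in> J \<Longrightarrow> j \<in> I \<Longrightarrow> aJ j \<in> A j" "\<And>j. j \<in> I \<Longrightarrow> finite (A j)"
  shows "deviate J aJ x \<in> mixed_profiles I A"
  unfolding mixed_profiles_def
proof (intro CollectI ballI conjI allI impI)
  fix i a assume "i \<in> I" "a \<notin> A i"
  then show "deviate J aJ x i a = 0"
    using assms(2) mixed_profilesD(2)[OF assms(1)] by (auto simp: deviate_def pure_def)
next
  fix i assume i: "i \<in> I"
  then show "sum (deviate J aJ x i) (A i) = 1"
    using assms(2,3) mixed_profilesD(3)[OF assms(1)] by (auto simp: deviate_def pure_def)
qed (use mixed_profilesD(1)[OF assms(1)] in \<open>auto simp: deviate_def pure_def\<close>)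

lemma convex_comb_in_mixed_profiles:
  assumes "x \<in> mixed_profiles I A" "y \<in> mixed_profiles I A" "0 \<le> t" "t \<le> 1"
  shows "(\<lambda>j a. (1-t) * x j a + t * y j a) \<in> mixed_profiles I A"
  using assms mixed_profilesD[OF assms(1)] mixed_profilesD[OF assms(2)]
  by (auto simp: mixed_profiles_def sum.distrib simp flip: sum_distrib_left)

lemma supp_convex_comb_subset:
  assumes "\<forall>a\<in>B. 0 \<le> u a" "\<forall>a\<in>B. 0 \<le> v a" "0 \<le> t" "t \<le> 1"
  shows "supp (\<lambda>a. (1-t) * u a + t * v a) B \<subseteq> supp u B \<union> supp v B"
proof
  fix a assume "a \<in> supp (\<lambda>a. (1-t) * u a + t * v a) B"
  then have "a \<in> B" "0 < (1-t) * u a + t * v a" by (auto simp: supp_def)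
  then have "0 < u a \<or> 0 < v a"
    using assms by (metis add.right_neutral less_eq_real_def mult_zero_right)
  then show "a \<in> supp u B \<union> supp v B" using \<open>a \<in> B\<close> by (auto simp: supp_def)
qed

lemma supp_subset_supp_convex_comb:
  assumes "\<forall>a\<in>B. 0 \<le> u a" "\<forall>a\<in>B. 0 \<le> v a" "0 \<le> t" "t < 1"
  shows "supp u B \<subseteq> supp (\<lambda>a. (1-t) * u a + t * v a) B"
  using assms by (auto simp: supp_def intro!: add_pos_nonneg)

section \<open>Continuity along paths\<close>

lemma continuous_on_mlext_deviate:
  assumes "\<And>j a. continuous_on T (\<lambda>t. \<gamma> t j a)"
  shows "continuous_on T (\<lambda>t. mlext I A F (deviate J aJ (\<gamma> t)))"
  unfolding mlext_def
proof (intro continuous_on_sum continuous_on_mult continuous_on_const continuous_on_prod)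
  fix a j show "continuous_on T (\<lambda>t. deviate J aJ (\<gamma> t) j (a j))"
    using assms by (cases "j \<in> J") (simp_all add: deviate_def)
qed

lemma continuous_on_Max:
  fixes g :: "'k \<Rightarrow> 'b::topological_space \<Rightarrow> 'c::linorder_topology"
  assumes "finite K" "K \<noteq> {}" "\<And>k. k \<in> K \<Longrightarrow> continuous_on S (g k)"
  shows "continuous_on S (\<lambda>t. Max ((\<lambda>k. g k t) ` K))"
  using assms
proof (induction K rule: finite_ne_induct)
  case (insert k K)
  then show ?case by (simp add: continuous_on_max)
qed simp

lemma nonvanishing_continuous_stays_negative:
  fixes \<phi> :: "real \<Rightarrow> real"
  assumes "continuous_on {a..<b} \<phi>" "\<phi> a < 0" "\<And>s. s \<in> {a..<b} \<Longrightarrow> \<phi> s \<noteq> 0" "t \<in> {a..<b}"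
  shows "\<phi> t < 0"
proof (rule ccontr)
  assume "\<not> \<phi> t < 0"
  moreover have "continuous_on {a..t} \<phi>"
    using assms(4) by (auto intro: continuous_on_subset[OF assms(1)])
  ultimately obtain s where "a \<le> s" "s \<le> t" "\<phi> s = 0"
    using IVT'[of \<phi> a 0 t] assms(2,4) by auto
  then show False using assms(3,4) by auto
qed

section \<open>Components of nonabsorbing profiles\<close>

lemma rtranclp_boundary_step:
  "R\<^sup>*\<^sup>* u v \<Longrightarrow> P u \<Longrightarrow> \<not> P v \<Longrightarrow> \<exists>e e'. R\<^sup>*\<^sup>* u e \<and> R e e' \<and> P e \<and> \<not> P e'"
  by (induction rule: rtranclp_induct) auto

lemma component_subset_nonabs: "C \<in> components I A p \<Longrightarrow> C \<subseteq> nonabs I A p"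
  unfolding components_def by auto

lemma component_boundary_edge:
  assumes C: "C \<in> components I A p" and sub: "PiE I S \<subseteq> C" and ne: "PiE I S \<noteq> C"
    and nonempty: "PiE I S \<noteq> {}"
  shows "\<exists>e e' i. e \<in> PiE I S \<and> e' \<in> C \<and> i \<in> I \<and> e' i \<notin> S i \<and> (\<forall>j\<in>I-{i}. e j = e' j)"
proof -
  obtain a0 where C_eq: "C = {b \<in> nonabs I A p. (adj I A p)\<^sup>*\<^sup>* a0 b}"
    using C unfolding components_def by auto
  obtain s where s: "s \<in> PiE I S" using nonempty by blast
  obtain d where d: "d \<in> C" "d \<notin> PiE I S" using sub ne by auto
  have "symp (adj I A p)" unfolding adj_def by (rule sympI) metis
  then have "(adj I A p)\<^sup>*\<^sup>* s a0"
    using s sub C_eq by (auto dest: sympD[OF symp_rtranclp])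
  moreover have "(adj I A p)\<^sup>*\<^sup>* a0 d" using d C_eq by auto
  ultimately have "(adj I A p)\<^sup>*\<^sup>* s d" by (rule rtranclp_trans)
  then obtain e e' where e: "(adj I A p)\<^sup>*\<^sup>* s e" "adj I A p e e'" "e \<in> PiE I S" "e' \<notin> PiE I S"
    using rtranclp_boundary_step[of "adj I A p" s d "\<lambda>u. u \<in> PiE I S"] s d by blast
  then obtain i where i: "i \<in> I" "\<forall>j\<in>I-{i}. e j = e' j" and "e' \<in> nonabs I A p"
    unfolding adj_def by blast
  have "e' \<in> C"
    using C_eq s sub e(1,2) \<open>e' \<in> nonabs I A p\<close> by (auto intro: rtranclp_trans)
  moreover have "e' i \<notin> S i"
  proof
    assume "e' i \<in> S i"
    then have "e' j \<in> S j" if "j \<in> I" for j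
      using e(3) i that by (cases "j = i") (auto simp: PiE_iff)
    moreover have "e' \<in> extensional I"
      using \<open>e' \<in> nonabs I A p\<close> by (simp add: nonabs_def profiles_def PiE_iff)
    ultimately have "e' \<in> PiE I S" by (simp add: PiE_iff)
    then show False using e(4) by simp
  qed
  ultimately show ?thesis using e(3) i by blast
qed

section \<open>Unilateral exits\<close>

locale absorbing_game =
  fixes I :: "'i set" and A :: "'i \<Rightarrow> 'a set" and p :: "('i \<Rightarrow> 'a) \<Rightarrow> real"
  assumes finite_players: "finite I"
    and finite_actions: "\<And>i. i \<in> I \<Longrightarrow> finite (A i)"
    and p_nonneg: "\<And>a. a \<in> profiles I A \<Longrightarrow> 0 \<le> p a"
begin

abbreviation exits :: "('i,'a) mixed \<Rightarrow> 'i \<Rightarrow> 'a set" where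
  "exits \<equiv> unilateral_exits I A p"

lemma finite_profiles: "finite (profiles I A)"
  unfolding profiles_def using finite_players finite_actions by (simp add: finite_PiE)

lemma finite_exits: "i \<in> I \<Longrightarrow> finite (exits x i)"
  unfolding unilateral_exits_def using finite_actions by simp

lemma p_ext_nonneg:
  assumes "y \<in> mixed_profiles I A"
  shows "0 \<le> p_ext I A p y"
  unfolding p_ext_def mlext_def using assms p_nonneg
  by (auto intro!: sum_nonneg mult_nonneg_nonneg prod_nonneg simp: profiles_def mixed_profilesD)

lemma p_ext_eq_0_iff:
  assumes y: "y \<in> mixed_profiles I A"
  shows "p_ext I A p y = 0 \<longleftrightarrow> (\<forall>b\<in>PiE I (\<lambda>j. supp (y j) (A j)). p b = 0)"
proof -
  have weight_eq_0: "(\<Prod>j\<in>I. y j (b j)) = 0 \<longleftrightarrow> b \<notin> PiE I (\<lambda>j. supp (y j) (A j))"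
    if "b \<in> profiles I A" for b
    using that finite_players mixed_profilesD(1)[OF y]
    by (auto simp: profiles_def supp_def PiE_iff order_less_le)
  have "p_ext I A p y = 0 \<longleftrightarrow> (\<forall>b\<in>profiles I A. p b * (\<Prod>j\<in>I. y j (b j)) = 0)"
    unfolding p_ext_def mlext_def
    by (rule sum_nonneg_eq_0_iff[OF finite_profiles])
      (use y p_nonneg in \<open>auto intro!: mult_nonneg_nonneg prod_nonneg simp: profiles_def mixed_profilesD\<close>)
  also have "\<dots> \<longleftrightarrow> (\<forall>b\<in>PiE I (\<lambda>j. supp (y j) (A j)). p b = 0)"
    using weight_eq_0 by (auto simp: profiles_def supp_def PiE_iff)
  finally show ?thesis .
qed

lemma deviate1_in_mixed_profiles:
  "y \<in> mixed_profiles I A \<Longrightarrow> b \<in> A i \<Longrightarrow> deviate {i} (\<lambda>_. b) y \<in> mixed_profiles I A"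
  by (rule deviate_in_mixed_profiles) (auto simp: finite_actions)

lemma pure_profile_in_mixed_profiles:
  assumes "\<And>j. j \<in> I \<Longrightarrow> e j \<in> A j"
  shows "(\<lambda>j. pure (e j)) \<in> mixed_profiles I A"
  using assms finite_actions by (auto simp: mixed_profiles_def pure_def)

lemma unilateral_exits_mono:
  assumes y: "y \<in> mixed_profiles I A" and y': "y' \<in> mixed_profiles I A"
    and supp: "\<And>j. j \<in> I \<Longrightarrow> supp (y' j) (A j) \<subseteq> supp (y j) (A j)"
  shows "exits y' i \<subseteq> exits y i"
proof
  fix b assume b: "b \<in> exits y' i"
  then have "b \<in> A i" by (simp add: unilateral_exits_def)
  have sub: "PiE I (\<lambda>j. supp (deviate {i} (\<lambda>_. b) y' j) (A j)) \<subseteq> PiE I (\<lambda>j. supp (deviate {i} (\<lambda>_. b) y j) (A j))"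
    using supp by (intro PiE_mono) (simp add: supp_deviate1 \<open>b \<in> A i\<close>)
  obtain c where "c \<in> PiE I (\<lambda>j. supp (deviate {i} (\<lambda>_. b) y' j) (A j))" "p c \<noteq> 0"
    using b p_ext_eq_0_iff[OF deviate1_in_mixed_profiles[OF y' \<open>b \<in> A i\<close>]]
    by (auto simp: unilateral_exits_def)
  then have "p_ext I A p (deviate {i} (\<lambda>_. b) y) \<noteq> 0"
    using sub p_ext_eq_0_iff[OF deviate1_in_mixed_profiles[OF y \<open>b \<in> A i\<close>]] by blast
  then show "b \<in> exits y i"
    using p_ext_nonneg[OF deviate1_in_mixed_profiles[OF y \<open>b \<in> A i\<close>]] \<open>b \<in> A i\<close>
    by (simp add: unilateral_exits_def order_less_le)
qed

lemma unilateral_exits_disjoint: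
  assumes y: "y \<in> mixed_profiles I A" and S: "PiE I S \<subseteq> nonabs I A p"
    and supp: "\<And>j. j \<in> I \<Longrightarrow> supp (y j) (A j) \<subseteq> S j" and i: "i \<in> I"
  shows "exits y i \<inter> S i = {}"
proof -
  have "p_ext I A p (deviate {i} (\<lambda>_. b) y) = 0" if b: "b \<in> A i" "b \<in> S i" for b
  proof -
    have "PiE I (\<lambda>j. supp (deviate {i} (\<lambda>_. b) y j) (A j)) \<subseteq> PiE I S"
      using supp b by (intro PiE_mono) (auto simp: supp_deviate1)
    then show ?thesis
      unfolding p_ext_eq_0_iff[OF deviate1_in_mixed_profiles[OF y b(1)]]
      using S unfolding nonabs_def by blast
  qed
  then show ?thesis by (auto simp: unilateral_exits_def)
qed

lemma rho_unilateral_exits: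
  "rho I A p r x i = (if exits x i = {} then -\<infinity>
     else Max ((\<lambda>b. ereal (r_ext I A p r i (deviate {i} (\<lambda>_. b) x))) ` exits x i))"
proof -
  have "{ereal (r_ext I A p r i (deviate {i} (\<lambda>_. b) x)) | b. b \<in> A i \<and> p_ext I A p (deviate {i} (\<lambda>_. b) x) > 0}
      = (\<lambda>b. ereal (r_ext I A p r i (deviate {i} (\<lambda>_. b) x))) ` exits x i"
    by (auto simp: unilateral_exits_def)
  then show ?thesis by (simp add: rho_def)
qed

lemma rho_less_iff:
  assumes "i \<in> I"
  shows "rho I A p r x i < ereal v \<longleftrightarrow> (\<forall>b\<in>exits x i. r_ext I A p r i (deviate {i} (\<lambda>_. b) x) < v)"
  using finite_exits[OF assms] by (simp add: rho_unilateral_exits)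

lemma rho_le_iff:
  assumes "i \<in> I"
  shows "rho I A p r x i \<le> ereal v \<longleftrightarrow> (\<forall>b\<in>exits x i. r_ext I A p r i (deviate {i} (\<lambda>_. b) x) \<le> v)"
  using finite_exits[OF assms] by (simp add: rho_unilateral_exits)

lemma in_WH_at_iff:
  "w \<in> WH_at I A p r x \<longleftrightarrow> (\<forall>i\<in>I. \<forall>b\<in>exits x i. r_ext I A p r i (deviate {i} (\<lambda>_. b) x) < w i)"
  by (simp add: WH_at_def rho_less_iff)

lemma in_W_atI:
  assumes le: "\<forall>i\<in>I. \<forall>b\<in>exits x i. r_ext I A p r i (deviate {i} (\<lambda>_. b) x) \<le> w i"
    and "j \<in> I" "b \<in> exits x j" "r_ext I A p r j (deviate {j} (\<lambda>_. b) x) = w j"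
  shows "w \<in> W_at I A p r x"
proof -
  have "rho I A p r x j = ereal (w j)"
    using assms rho_le_iff[of j] rho_less_iff[of j] by (metis order_less_le)
  moreover have "\<forall>i\<in>I. rho I A p r x i \<le> ereal (w i)" using le rho_le_iff by blast
  ultimately show ?thesis unfolding W_at_def using \<open>j \<in> I\<close> by (auto intro!: bexI[of _ j])
qed

lemma in_W_at_if_max_gap_eq_0:
  assumes ne: "Sigma I (exits y) \<noteq> {}"
    and max: "Max ((\<lambda>k. r_ext I A p r (fst k) (deviate {fst k} (\<lambda>_. snd k) y) - w (fst k)) ` Sigma I (exits y)) = 0"
  shows "w \<in> W_at I A p r y"
proof -
  define g where "g = (\<lambda>k. r_ext I A p r (fst k) (deviate {fst k} (\<lambda>_. snd k) y) - w (fst k))"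
  have fin: "finite (g ` Sigma I (exits y))" using finite_players finite_exits by blast
  have max_g: "Max (g ` Sigma I (exits y)) = 0" using max unfolding g_def .
  have "\<forall>i\<in>I. \<forall>b\<in>exits y i. r_ext I A p r i (deviate {i} (\<lambda>_. b) y) \<le> w i"
  proof (intro ballI)
    fix i b assume "i \<in> I" "b \<in> exits y i"
    then have "g (i, b) \<le> 0" using Max_ge[OF fin] max_g by simp
    then show "r_ext I A p r i (deviate {i} (\<lambda>_. b) y) \<le> w i" by (simp add: g_def)
  qed
  moreover have "Max (g ` Sigma I (exits y)) \<in> g ` Sigma I (exits y)" using fin ne by (intro Max_in) auto
  then obtain k where "k \<in> Sigma I (exits y)" "g k = 0" using max_g by auto
  ultimately show ?thesis
    using in_W_atI[where j = "fst k" and b = "snd k"] by (auto simp: g_def)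
qed

lemma in_WH_atI:
  assumes "\<forall>i\<in>I. \<forall>b\<in>exits x i. r_ext I A p r i (deviate {i} (\<lambda>_. b) x) \<le> w i"
    and "w \<notin> W_at I A p r x"
  shows "w \<in> WH_at I A p r x"
  using assms rho_le_iff by (force simp: W_at_def WH_at_def order_less_le)

section \<open>Propagating W_H along paths\<close>

lemma continuous_on_r_ext_deviate1:
  assumes cont: "\<And>j a. continuous_on T (\<lambda>t. \<gamma> t j a)" and exit: "\<And>t. t \<in> T \<Longrightarrow> b \<in> exits (\<gamma> t) i"
  shows "continuous_on T (\<lambda>t. r_ext I A p r i (deviate {i} (\<lambda>_. b) (\<gamma> t)))"
  unfolding r_ext_def p_ext_def
  by (intro continuous_on_divide continuous_on_mlext_deviate cont)
    (fastforce dest: exit simp: unilateral_exits_def p_ext_def)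

(* The largest gap r_i - w_i over the exits at \<gamma> 0 starts negative and cannot reach 0 without
   putting w into W(\<gamma> s). *)
lemma WH_at_along_path_before_end:
  fixes \<gamma> :: "real \<Rightarrow> ('i,'a) mixed"
  assumes cont: "\<And>j a. continuous_on {0..<1} (\<lambda>t. \<gamma> t j a)"
    and not_W: "\<And>t. t \<in> {0..<1} \<Longrightarrow> w \<notin> W_at I A p r (\<gamma> t)"
    and start: "w \<in> WH_at I A p r (\<gamma> 0)"
    and exits_const: "\<And>t j. t \<in> {0..<1} \<Longrightarrow> j \<in> I \<Longrightarrow> exits (\<gamma> t) j = exits (\<gamma> 0) j"
    and t: "t \<in> {0..<1}"
  shows "w \<in> WH_at I A p r (\<gamma> t)"
proof -
  define P where "P = Sigma I (exits (\<gamma> 0))"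
  define f where "f k s = r_ext I A p r (fst k) (deviate {fst k} (\<lambda>_. snd k) (\<gamma> s))" for k s
  define \<phi> where "\<phi> s = Max ((\<lambda>k. f k s - w (fst k)) ` P)" for s
  have finite_P: "finite P"
    unfolding P_def using finite_players finite_exits by blast
  have exit_along_path: "snd k \<in> exits (\<gamma> s) (fst k)" if "k \<in> P" "s \<in> {0..<1}" for k s
    using that exits_const[of s "fst k"] by (auto simp: P_def)
  have "f k t < w (fst k)" if k: "k \<in> P" for k
  proof -
    have "P \<noteq> {}" using k by auto
    have "continuous_on {0..<1} (\<lambda>s. f k s - w (fst k))" if "k \<in> P" for k
      unfolding f_def using that exit_along_path
      by (intro continuous_on_diff continuous_on_const continuous_on_r_ext_deviate1 cont) auto
    then have "continuous_on {0..<1} \<phi>"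
      unfolding \<phi>_def by (rule continuous_on_Max[OF finite_P \<open>P \<noteq> {}\<close>])
    moreover have "\<phi> 0 < 0"
      using start finite_P \<open>P \<noteq> {}\<close> by (auto simp: \<phi>_def in_WH_at_iff f_def P_def)
    moreover have "\<phi> s \<noteq> 0" if s: "s \<in> {0..<1}" for s
    proof
      assume "\<phi> s = 0"
      moreover have "Sigma I (exits (\<gamma> s)) = P" using exits_const[OF s] by (auto simp: P_def)
      ultimately have "w \<in> W_at I A p r (\<gamma> s)"
        using \<open>P \<noteq> {}\<close> by (intro in_W_at_if_max_gap_eq_0) (simp_all add: \<phi>_def f_def)
      then show False using not_W s by auto
    qed
    ultimately have "\<phi> t < 0" using nonvanishing_continuous_stays_negative t by blast
    moreover have "f k t - w (fst k) \<le> \<phi> t"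
      unfolding \<phi>_def using k finite_P by (intro Max_ge) auto
    ultimately show ?thesis by simp
  qed
  then show ?thesis
    using exits_const[OF t] by (auto simp: in_WH_at_iff P_def f_def)
qed

lemma WH_at_along_path:
  fixes \<gamma> :: "real \<Rightarrow> ('i,'a) mixed"
  assumes cont: "\<And>j a. continuous_on {0..1} (\<lambda>t. \<gamma> t j a)"
    and not_W: "\<And>t. t \<in> {0..1} \<Longrightarrow> w \<notin> W_at I A p r (\<gamma> t)"
    and start: "w \<in> WH_at I A p r (\<gamma> 0)"
    and exits_const: "\<And>t j. t \<in> {0..<1} \<Longrightarrow> j \<in> I \<Longrightarrow> exits (\<gamma> t) j = exits (\<gamma> 0) j"
    and exits_end: "\<And>j. j \<in> I \<Longrightarrow> exits (\<gamma> 1) j \<subseteq> exits (\<gamma> 0) j"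
  shows "w \<in> WH_at I A p r (\<gamma> 1)"
proof -
  have "r_ext I A p r i (deviate {i} (\<lambda>_. b) (\<gamma> 1)) \<le> w i" if i: "i \<in> I" and b: "b \<in> exits (\<gamma> 1) i" for i b
  proof (rule continuous_le_on_closure[of "{0..<1}" "\<lambda>t. r_ext I A p r i (deviate {i} (\<lambda>_. b) (\<gamma> t))"])
    have exit: "b \<in> exits (\<gamma> t) i" if "t \<in> {0..1}" for t
      using that b exits_end[OF i] exits_const[OF _ i, of t] by (cases "t = 1") auto
    show "continuous_on (closure {0..<1}) (\<lambda>t. r_ext I A p r i (deviate {i} (\<lambda>_. b) (\<gamma> t)))"
      unfolding closure_atLeastLessThan[OF zero_less_one] by (rule continuous_on_r_ext_deviate1[OF cont exit])
    fix t :: real assume t: "t \<in> {0..<1}"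
    have "w \<in> WH_at I A p r (\<gamma> t)"
      using continuous_on_subset[OF cont, of "{0..<1}"] not_W
      by (intro WH_at_along_path_before_end[where \<gamma> = \<gamma>, OF _ _ start exits_const t])
        (auto simp: atLeastLessThan_subseteq_atLeastAtMost_iff)
    then show "r_ext I A p r i (deviate {i} (\<lambda>_. b) (\<gamma> t)) \<le> w i"
      using exit[of t] t i by (auto simp: in_WH_at_iff less_imp_le)
  qed simp
  then show ?thesis using not_W[of 1] by (intro in_WH_atI) auto
qed

section \<open>The rectangle of non-exit actions\<close>

lemma rectangle_adj_connected:
  assumes S: "PiE I S \<subseteq> nonabs I A p" and s: "s \<in> PiE I S" and b: "b \<in> PiE I S"
  shows "(adj I A p)\<^sup>*\<^sup>* s b"
proof -
  have "(adj I A p)\<^sup>*\<^sup>* s (\<lambda>j. if j \<in> K then b j else s j)" if "K \<subseteq> I" for K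
    using finite_subset[OF that finite_players] that
  proof (induction K rule: finite_induct)
    case (insert k K)
    let ?m = "\<lambda>K j. if j \<in> K then b j else s j"
    have "?m K \<in> PiE I S" "?m (insert k K) \<in> PiE I S"
      using s b by (auto simp: PiE_iff extensional_def)
    then have "adj I A p (?m K) (?m (insert k K))"
      unfolding adj_def using S insert.prems by (intro conjI bexI[of _ k]) auto
    then show ?case using insert by (meson insert_subset rtranclp.rtrancl_into_rtrancl)
  qed simp
  moreover have "(\<lambda>j. if j \<in> I then b j else s j) = b"
    using s b by (auto simp: PiE_iff extensional_def)
  ultimately show ?thesis by (metis order_refl)
qed

lemma rectangle_subset_component:
  assumes C: "C \<in> components I A p" and S: "PiE I S \<subseteq> nonabs I A p"
    and s: "s \<in> PiE I S" "s \<in> C"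
  shows "PiE I S \<subseteq> C"
proof
  fix b assume b: "b \<in> PiE I S"
  obtain a0 where C_eq: "C = {b \<in> nonabs I A p. (adj I A p)\<^sup>*\<^sup>* a0 b}"
    using C unfolding components_def by auto
  then have "(adj I A p)\<^sup>*\<^sup>* a0 b"
    using s(2) rectangle_adj_connected[OF S s(1) b] by auto
  then show "b \<in> C" using C_eq b S by auto
qed

lemma exit_within_absorbing_deviation:
  assumes x: "x \<in> mixed_profiles I A" and px: "p_ext I A p x = 0"
    and a: "\<And>j. j \<in> I \<Longrightarrow> a j \<in> A j"
    and J0: "J0 \<subseteq> I" "0 < p_ext I A p (deviate J0 a x)"
  shows "\<exists>J\<subseteq>J0. is_exit I A p x J (restrict a J)"
proof -
  define F where "F = {J. J \<subseteq> J0 \<and> 0 < p_ext I A p (deviate J a x)}"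
  have "finite F" using finite_subset[OF J0(1) finite_players] by (auto simp: F_def)
  moreover have "J0 \<in> F" using J0 by (simp add: F_def)
  ultimately obtain J where J: "J \<in> F" and J_min: "\<And>J'. J' \<in> F \<Longrightarrow> J' \<subseteq> J \<Longrightarrow> J' = J"
    using finite_has_minimal[of F] by blast
  have JJ0: "J \<subseteq> J0" and J_pos: "0 < p_ext I A p (deviate J a x)" using J by (auto simp: F_def)
  have restrict_J: "deviate J' (restrict a J) x = deviate J' a x" if "J' \<subseteq> J" for J'
    using that by (auto simp: deviate_def fun_eq_iff)
  have "is_exit I A p x J (restrict a J)"
    unfolding is_exit_def
  proof (intro conjI allI impI)
    show "J \<noteq> {}" using J_pos px by (auto simp: deviate_def)
    show "J \<subseteq> I" "restrict a J \<in> PiE J A" using JJ0 J0(1) a by auto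
    show "0 < p_ext I A p (deviate J (restrict a J) x)" using restrict_J J_pos by simp
    fix J' assume "J' \<subset> J"
    then have "\<not> 0 < p_ext I A p (deviate J' a x)" using J_min JJ0 by (auto simp: F_def)
    moreover have "deviate J' a x \<in> mixed_profiles I A"
      using deviate_in_mixed_profiles[OF x] a finite_actions by blast
    ultimately show "p_ext I A p (deviate J' (restrict a J) x) = 0"
      using restrict_J \<open>J' \<subset> J\<close> p_ext_nonneg by (simp add: order_less_le)
  qed
  then show ?thesis using JJ0 by blast
qed

(* An absorbing profile of non-exit actions would contain an exit (J, a_J); without joint exits
   J = {i}, i.e. a_i would be a unilateral exit. *)
lemma PiE_non_exits_subset_nonabs:
  assumes x: "x \<in> mixed_profiles I A" and px: "p_ext I A p x = 0"
    and no_joint: "joint_exits I A p x = {}"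
  shows "PiE I (\<lambda>j. A j - exits x j) \<subseteq> nonabs I A p"
proof
  fix a assume a: "a \<in> PiE I (\<lambda>j. A j - exits x j)"
  then have a_prof: "a \<in> profiles I A" by (auto simp: profiles_def PiE_iff)
  then have aA: "\<And>j. j \<in> I \<Longrightarrow> a j \<in> A j" by (auto simp: profiles_def)
  have "p a = 0"
  proof (rule ccontr)
    assume "p a \<noteq> 0"
    have dev_mixed: "deviate I a x \<in> mixed_profiles I A"
      using deviate_in_mixed_profiles[OF x] aA finite_actions by blast
    have "PiE I (\<lambda>j. supp (deviate I a x j) (A j)) = PiE I (\<lambda>j. {a j})"
      by (rule PiE_cong) (simp add: deviate_def supp_pure aA)
    also have "\<dots> = {a}"
      using a_prof by (intro PiE_singleton) (simp add: profiles_def PiE_iff)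
    finally have "0 < p_ext I A p (deviate I a x)"
      using p_ext_eq_0_iff[OF dev_mixed] p_ext_nonneg[OF dev_mixed] \<open>p a \<noteq> 0\<close>
      by (auto simp: order_less_le)
    then obtain J where JI: "J \<subseteq> I" and exit: "is_exit I A p x J (restrict a J)"
      using exit_within_absorbing_deviation[OF x px aA] by blast
    then have "card J < 2" using no_joint by (auto simp: joint_exits_def)
    moreover have "finite J" "J \<noteq> {}" using JI finite_players finite_subset exit by (auto simp: is_exit_def)
    ultimately have "card J = 1" by (simp add: card_gt_0_iff less_2_cases_iff)
    then obtain i where "J = {i}" by (rule card_1_singletonE)
    moreover have "deviate {i} (restrict a {i}) x = deviate {i} (\<lambda>_. a i) x"
      by (auto simp: deviate_def fun_eq_iff)
    ultimately have "a i \<in> exits x i"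
      using exit aA JI by (simp add: is_exit_def unilateral_exits_def)
    then show False using a \<open>J = {i}\<close> JI by (auto simp: PiE_iff)
  qed
  then show "a \<in> nonabs I A p" using a_prof by (simp add: nonabs_def)
qed

lemma Xcomp_p_ext_eq_0:
  assumes "C \<in> components I A p" "x \<in> Xcomp I A C"
  shows "p_ext I A p x = 0"
  using assms component_subset_nonabs[OF assms(1)] p_ext_eq_0_iff
  by (auto simp: Xcomp_def nonabs_def)

lemma Xcomp_supp_subset_non_exits:
  assumes C: "C \<in> components I A p" and x: "x \<in> Xcomp I A C" and j: "j \<in> I"
  shows "supp (x j) (A j) \<subseteq> A j - exits x j"
proof -
  have "PiE I (\<lambda>j. supp (x j) (A j)) \<subseteq> nonabs I A p"
    using x component_subset_nonabs[OF C] by (auto simp: Xcomp_def)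
  then have "exits x j \<inter> supp (x j) (A j) = {}"
    using x j by (intro unilateral_exits_disjoint) (auto simp: Xcomp_def)
  then show ?thesis by (auto simp: supp_def)
qed

lemma non_exit_rectangle_subset_component:
  assumes C: "C \<in> components I A p" and x: "x \<in> Xcomp I A C" and no_joint: "joint_exits I A p x = {}"
  shows "PiE I (\<lambda>j. A j - exits x j) \<subseteq> C"
proof -
  have xm: "x \<in> mixed_profiles I A" using x by (simp add: Xcomp_def)
  have "PiE I (\<lambda>j. supp (x j) (A j)) \<noteq> {}"
    using supp_mixed_profile_nonempty[OF xm] by (simp add: PiE_eq_empty_iff)
  then obtain s where s: "s \<in> PiE I (\<lambda>j. supp (x j) (A j))" by blast
  then have "s \<in> C" using x by (auto simp: Xcomp_def)
  moreover have "s \<in> PiE I (\<lambda>j. A j - exits x j)"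
    using s Xcomp_supp_subset_non_exits[OF C x] by (auto simp: PiE_iff)
  ultimately show ?thesis
    using rectangle_subset_component[OF C PiE_non_exits_subset_nonabs[OF xm Xcomp_p_ext_eq_0[OF C x] no_joint]]
    by blast
qed

lemma exits_subset_of_supp_non_exits:
  assumes y: "y \<in> mixed_profiles I A" and safe: "PiE I (\<lambda>j. A j - exits x j) \<subseteq> nonabs I A p"
    and supp_y: "\<And>j. j \<in> I \<Longrightarrow> supp (y j) (A j) \<subseteq> A j - exits x j" and i: "i \<in> I"
  shows "exits y i \<subseteq> exits x i"
  using unilateral_exits_disjoint[OF y safe supp_y i] by (auto simp: unilateral_exits_def)

lemma WH_at_segment:
  assumes x: "x \<in> mixed_profiles I A" and y: "y \<in> mixed_profiles I A"
    and safe: "PiE I (\<lambda>j. A j - exits x j) \<subseteq> nonabs I A p"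
    and supp_x: "\<And>j. j \<in> I \<Longrightarrow> supp (x j) (A j) \<subseteq> A j - exits x j"
    and supp_y: "\<And>j. j \<in> I \<Longrightarrow> supp (y j) (A j) \<subseteq> A j - exits x j"
    and not_W: "\<And>z. z \<in> mixed_profiles I A \<Longrightarrow> (\<And>j. j \<in> I \<Longrightarrow> supp (z j) (A j) \<subseteq> A j - exits x j)
                  \<Longrightarrow> w \<notin> W_at I A p r z"
    and wx: "w \<in> WH_at I A p r x"
  shows "w \<in> WH_at I A p r y"
proof -
  define \<gamma> where "\<gamma> t = (\<lambda>j a. (1-t) * x j a + t * y j a)" for t :: real
  have \<gamma>_0: "\<gamma> 0 = x" and \<gamma>_1: "\<gamma> 1 = y" by (simp_all add: \<gamma>_def)
  have \<gamma>_mixed: "\<gamma> t \<in> mixed_profiles I A" if "t \<in> {0..1}" for t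
    unfolding \<gamma>_def using convex_comb_in_mixed_profiles[OF x y] that by simp
  have \<gamma>_supp: "supp (\<gamma> t j) (A j) \<subseteq> A j - exits x j" if "t \<in> {0..1}" "j \<in> I" for t j
    using supp_convex_comb_subset[of "A j" "x j" "y j" t] supp_x[of j] supp_y[of j] that
      mixed_profilesD(1)[OF x] mixed_profilesD(1)[OF y]
    unfolding \<gamma>_def by fastforce
  have "w \<in> WH_at I A p r (\<gamma> 1)"
  proof (rule WH_at_along_path)
    show "continuous_on {0..1} (\<lambda>t. \<gamma> t j a)" for j a
      unfolding \<gamma>_def by (intro continuous_intros)
    show "w \<notin> W_at I A p r (\<gamma> t)" if "t \<in> {0..1}" for t
      using that \<gamma>_mixed \<gamma>_supp by (intro not_W) auto
    show "w \<in> WH_at I A p r (\<gamma> 0)" using wx \<gamma>_0 by simp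
    show "exits (\<gamma> t) j = exits (\<gamma> 0) j" if t: "t \<in> {0..<1}" and j: "j \<in> I" for t j
    proof
      show "exits (\<gamma> t) j \<subseteq> exits (\<gamma> 0) j"
        using t j \<gamma>_mixed[of t] \<gamma>_supp[of t] exits_subset_of_supp_non_exits[OF _ safe]
        by (simp add: \<gamma>_0)
      have "supp (x i) (A i) \<subseteq> supp (\<gamma> t i) (A i)" if "i \<in> I" for i
        unfolding \<gamma>_def using t that mixed_profilesD(1)[OF x] mixed_profilesD(1)[OF y]
        by (intro supp_subset_supp_convex_comb) auto
      then show "exits (\<gamma> 0) j \<subseteq> exits (\<gamma> t) j"
        using unilateral_exits_mono[OF \<gamma>_mixed x] t by (simp add: \<gamma>_0)
    qed
    show "exits (\<gamma> 1) j \<subseteq> exits (\<gamma> 0) j" if "j \<in> I" for j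
      using that exits_subset_of_supp_non_exits[OF y safe supp_y] by (simp add: \<gamma>_0 \<gamma>_1)
  qed
  then show ?thesis by (simp add: \<gamma>_1)
qed

lemma neighbour_not_exit_at_pure_profile:
  assumes e': "e' \<in> nonabs I A p" and i: "i \<in> I" and e: "\<And>j. j \<in> I \<Longrightarrow> e j \<in> A j"
    and same: "\<forall>j\<in>I-{i}. e j = e' j"
  shows "e' i \<notin> exits (\<lambda>j. pure (e j)) i"
proof -
  have e'A: "\<And>j. j \<in> I \<Longrightarrow> e' j \<in> A j" and e'_ext: "e' \<in> extensional I"
    using e' by (auto simp: nonabs_def profiles_def PiE_iff)
  have "PiE I (\<lambda>j. supp (deviate {i} (\<lambda>_. e' i) (\<lambda>j. pure (e j)) j) (A j)) = PiE I (\<lambda>j. {e' j})"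
    using same e e'A i by (intro PiE_cong) (auto simp: supp_deviate1 supp_pure)
  also have "\<dots> = {e'}" using e'_ext by (rule PiE_singleton)
  finally have "p_ext I A p (deviate {i} (\<lambda>_. e' i) (\<lambda>j. pure (e j))) = 0"
    using p_ext_eq_0_iff deviate1_in_mixed_profiles[OF pure_profile_in_mixed_profiles[OF e] e'A[OF i]] e'
    by (simp add: nonabs_def)
  then show ?thesis by (simp add: unilateral_exits_def)
qed

lemma exists_fewer_exits:
  assumes C: "C \<in> components I A p" and not_rect: "\<not> rectangular I C"
    and x: "x \<in> Xcomp I A C" and wx: "w \<in> WH_at I A p r x"
    and no_joint: "joint_exits I A p x = {}"
    and not_W: "\<And>z. z \<in> Xcomp I A C \<Longrightarrow> w \<notin> W_at I A p r z"
  shows "\<exists>y\<in>Xcomp I A C. w \<in> WH_at I A p r y \<and> (\<forall>j\<in>I. exits y j \<subseteq> exits x j)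
           \<and> (\<exists>i\<in>I. exits y i \<noteq> exits x i)"
proof -
  define S where "S = (\<lambda>j. A j - exits x j)"
  have xm: "x \<in> mixed_profiles I A" using x by (simp add: Xcomp_def)
  have SC: "PiE I S \<subseteq> C"
    unfolding S_def using non_exit_rectangle_subset_component[OF C x no_joint] .
  then have safe: "PiE I S \<subseteq> nonabs I A p" using component_subset_nonabs[OF C] by blast
  have supp_x: "supp (x j) (A j) \<subseteq> S j" if "j \<in> I" for j
    unfolding S_def using Xcomp_supp_subset_non_exits[OF C x that] by simp
  have "PiE I S \<noteq> {}"
    unfolding PiE_eq_empty_iff using supp_x supp_mixed_profile_nonempty[OF xm] by blast
  have in_Xcomp: "z \<in> Xcomp I A C"
    if "z \<in> mixed_profiles I A" "\<And>j. j \<in> I \<Longrightarrow> supp (z j) (A j) \<subseteq> S j" for z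
    using that SC PiE_mono[of I "\<lambda>j. supp (z j) (A j)" S] by (auto simp: Xcomp_def)
  have "PiE I S \<noteq> C" using not_rect by (auto simp: rectangular_def)
  then obtain e e' i where e: "e \<in> PiE I S" and e': "e' \<in> C" "i \<in> I" "e' i \<notin> S i"
      and same: "\<forall>j\<in>I-{i}. e j = e' j"
    using component_boundary_edge[OF C SC _ \<open>PiE I S \<noteq> {}\<close>] by blast
  define y where "y j = pure (e j)" for j
  have eA: "e j \<in> A j" if "j \<in> I" for j using e that by (auto simp: S_def PiE_iff)
  have ym: "y \<in> mixed_profiles I A" unfolding y_def using pure_profile_in_mixed_profiles eA .
  have supp_y: "supp (y j) (A j) \<subseteq> S j" if "j \<in> I" for j
    using e that by (auto simp: y_def supp_pure eA PiE_iff)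
  have "w \<in> WH_at I A p r y"
  proof (rule WH_at_segment[OF xm ym safe[unfolded S_def] supp_x[unfolded S_def] supp_y[unfolded S_def] _ wx])
    fix z assume "z \<in> mixed_profiles I A" "\<And>j. j \<in> I \<Longrightarrow> supp (z j) (A j) \<subseteq> A j - exits x j"
    then have "z \<in> Xcomp I A C" by (intro in_Xcomp) (simp_all add: S_def)
    then show "w \<notin> W_at I A p r z" by (rule not_W)
  qed
  moreover have "\<forall>j\<in>I. exits y j \<subseteq> exits x j"
    using exits_subset_of_supp_non_exits[OF ym safe[unfolded S_def] supp_y[unfolded S_def]] by blast
  moreover have "e' \<in> nonabs I A p" using e' component_subset_nonabs[OF C] by blast
  then have "e' i \<in> exits x i"
    using e'(2,3) by (auto simp: S_def nonabs_def profiles_def)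
  moreover have "e' i \<notin> exits y i"
    unfolding y_def using neighbour_not_exit_at_pure_profile[OF \<open>e' \<in> nonabs I A p\<close> \<open>i \<in> I\<close> eA same] .
  ultimately show ?thesis using in_Xcomp[OF ym supp_y] \<open>i \<in> I\<close> by blast
qed

end

theorem mainTheorem8:
  fixes I :: "'i set" and A :: "'i \<Rightarrow> 'a set"
    and r :: "'i \<Rightarrow> ('i \<Rightarrow> 'a) \<Rightarrow> real" and p :: "('i \<Rightarrow> 'a) \<Rightarrow> real"
    and w :: "'i \<Rightarrow> real"
  assumes "finite I"
    and "\<forall>i\<in>I. finite (A i) \<and> A i \<noteq> {}"
    and "\<forall>i\<in>I. \<forall>a\<in>profiles I A. 0 < r i a \<and> r i a \<le> 1"
    and "\<forall>a\<in>profiles I A. 0 \<le> p a \<and> p a \<le> 1"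
    and "\<forall>C\<in>components I A p. \<not> rectangular I C"
    and "w \<in> WH I A p r - W I A p r"
  shows "\<exists>C\<in>components I A p. \<exists>x\<in>Xcomp I A C.
           w \<in> WH_at I A p r x \<and> joint_exits I A p x \<noteq> {}"
proof -
  interpret absorbing_game I A p using assms(1,2,4) by unfold_locales auto
  define G where "G = {x. \<exists>C\<in>components I A p. x \<in> Xcomp I A C \<and> w \<in> WH_at I A p r x}"
  define m where "m x = (\<Sum>j\<in>I. card (exits x j))" for x
  obtain x0 where "x0 \<in> G" using assms(6) by (auto simp: G_def WH_def Xall_def)
  then obtain x where "x \<in> G" and x_min: "\<And>y. y \<in> G \<Longrightarrow> m x \<le> m y"
    using ex_has_least_nat[of "\<lambda>x. x \<in> G" x0 m] by blast
  then obtain C where C: "C \<in> components I A p" "x \<in> Xcomp I A C" "w \<in> WH_at I A p r x"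
    by (auto simp: G_def)
  show ?thesis
  proof (rule ccontr)
    assume "\<not> ?thesis"
    then have "joint_exits I A p x = {}" using C by blast
    moreover have "\<And>z. z \<in> Xcomp I A C \<Longrightarrow> w \<notin> W_at I A p r z"
      using assms(6) C(1) by (auto simp: W_def Xall_def)
    ultimately obtain y i where y: "y \<in> Xcomp I A C" "w \<in> WH_at I A p r y"
        "\<forall>j\<in>I. exits y j \<subseteq> exits x j" "i \<in> I" "exits y i \<noteq> exits x i"
      using exists_fewer_exits[OF C(1) _ C(2,3)] assms(5) C(1) by blast
    then have "card (exits y i) < card (exits x i)"
      using finite_exits by (intro psubset_card_mono) auto
    then have "m y < m x"
      unfolding m_def using y finite_exits
      by (intro sum_strict_mono_ex1 finite_players) (auto intro!: card_mono)
    moreover have "y \<in> G" using y C(1) by (auto simp: G_def)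
    ultimately show False using x_min by fastforce
  qed
qed

end
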